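(* Let $N\geq1$ be an integer, $k>0$, $r>0$, and let $y^*$ be the unique zero in $(0,1)$ of $p_N(y):=1-(N+1)^2y^N+N(2N+3)y^{N+1}-N(N+1)y^{N+2}$. For every $y\in(0,y^*]$, let $\alpha:=r\widetilde{\mathcal F}_N(y)$ with $\widetilde{\mathcal F}_N(y):=\frac{y}{1-y}\big(1-(N+1)y^N+Ny^{N+1}\big)$, let $U$ be the equilibrium of $\dot U=F(U)$ given by $U_1=\frac1k\frac{y}{1-y}$, $U_2=r$, $U_3=r\frac{y^{N+1}}{1-y}((N+1)-Ny)$, $U_4=ry^N$, $U_{5+i}=r(1-y)y^i$ ($0\le i\le N$), and let $A=DF(U)$. Then $A$ has no purely imaginary eigenvalues, i.e. no eigenvalue of the form $i\omega$ with $\omega\in\mathbb{R}\setminus\{0\}$.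
   Context: The map $F:\mathbb{R}^{N+5}\to\mathbb{R}^{N+5}$ is defined by $F_1(U)=\alpha+U_3-kU_1U_2$, $F_2(U)=r-U_2$, $F_3(U)=-U_3+kU_1U_4+NkU_1U_{N+5}$, $F_4(U)=-U_4+kU_1U_{N+4}$, $F_5(U)=r-U_5-kU_1U_5$, $F_j(U)=-U_j+kU_1U_{j-1}-kU_1U_j$ for $6\le j\le N+5$. It is known that $p_N$ has exactly one zero in $(0,1)$. *)

theory Defs
  imports "HOL-Analysis.Derivative" "Jordan_Normal_Form.Char_Poly"
begin

(* States U in R^(N+5) are represented as functions nat => real, using the
   paper's 1-based indices 1..N+5 (values at other indices are irrelevant). *)

definition pN :: "nat \<Rightarrow> real \<Rightarrow> real" where
  "pN N y = 1 - (real N + 1)^2 * y^N + real N * (2 * real N + 3) * y^(N+1)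
            - real N * (real N + 1) * y^(N+2)"

definition FtildeN :: "nat \<Rightarrow> real \<Rightarrow> real" where
  "FtildeN N y = y / (1 - y) * (1 - (real N + 1) * y^N + real N * y^(N+1))"

definition Fmap :: "nat \<Rightarrow> real \<Rightarrow> real \<Rightarrow> real \<Rightarrow> (nat \<Rightarrow> real) \<Rightarrow> nat \<Rightarrow> real" where
  "Fmap N k r \<alpha> U j =
     (if j = 1 then \<alpha> + U 3 - k * U 1 * U 2
      else if j = 2 then r - U 2
      else if j = 3 then - U 3 + k * U 1 * U 4 + real N * k * U 1 * U (N+5)
      else if j = 4 then - U 4 + k * U 1 * U (N+4)
      else if j = 5 then r - U 5 - k * U 1 * U 5
      else if 6 \<le> j \<and> j \<le> N+5 then - U j + k * U 1 * U (j-1) - k * U 1 * U j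
      else 0)"

definition Ueq :: "nat \<Rightarrow> real \<Rightarrow> real \<Rightarrow> real \<Rightarrow> nat \<Rightarrow> real" where
  "Ueq N k r y j =
     (if j = 1 then (1/k) * (y / (1 - y))
      else if j = 2 then r
      else if j = 3 then r * (y^(N+1) / (1 - y)) * ((real N + 1) - real N * y)
      else if j = 4 then r * y^N
      else if 5 \<le> j \<and> j \<le> N+5 then r * (1 - y) * y^(j-5)
      else 0)"

(* Jacobian DF(U) as an (N+5)x(N+5) complex matrix; row i / column j of the
   0-based JNF matrix correspond to the paper's indices i+1 / j+1;
   entry = partial derivative of F_{i+1} w.r.t. U_{j+1} at U. *)
definition jacobian :: "nat \<Rightarrow> ((nat \<Rightarrow> real) \<Rightarrow> nat \<Rightarrow> real) \<Rightarrow> (nat \<Rightarrow> real) \<Rightarrow> complex mat" where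
  "jacobian n F U = mat n n (\<lambda>(i, j).
      complex_of_real (deriv (\<lambda>t. F (U(Suc j := t)) (Suc i)) (U (Suc j))))"

end

theory Submission
  imports Defs
begin

(* Both HOL-Analysis and Jordan_Normal_Form use $ for vector indexing; here it is the latter. *)
unbundle no vec_syntax

text \<open>
  Let V be an eigenvector of DF(U) for an eigenvalue L with Re L = 0, and put t = 1 - y, s = k r.
  The rows of DF(U) form a driven cascade: V_2 = 0, the tail V_5, ..., V_(N+5) is driven by V_1
  through the factor b = 1 / (1 + t L), then V_4 and V_3 are explicit multiples of V_1, and the
  first row becomes V_1 (L + s - s H) = 0 with
  H = y^N (t (1 + N t) (b + ... + b^(N+1)) + y b^(N+1) / (1 + L)).
  On the imaginary axis |b| <= 1, and |1 / (1 + L)| < 1 unless L = 0, so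
  |H| < y^N ((N + 1) t (1 + N t) + y) = 1 - p_N(y). Finally p_N(y) >= 0, because p_N(0) = 1 and
  y* is the only zero of p_N in (0, 1). Hence Re (L + s - s H) > 0, so V_1 = 0 and then V = 0.
\<close>

section \<open>Geometric sums and a driven cascade\<close>

lemma sum_powers_Suc:
  fixes b :: "'a::comm_ring_1"
  shows "(\<Sum>j=1..Suc m. b^j) = b * (1 + (\<Sum>j=1..m. b^j))"
proof -
  have "(\<Sum>j=1..Suc m. b^j) = (\<Sum>j=0..m. b^Suc j)"
    using sum.shift_bounds_cl_Suc_ivl[of "\<lambda>j. b^j" 0 m] by simp
  also have "\<dots> = b * (\<Sum>j=0..m. b^j)"
    by (simp add: sum_distrib_left)
  also have "(\<Sum>j=0..m. b^j) = 1 + (\<Sum>j=1..m. b^j)"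
    by (simp add: sum.atLeast_Suc_atMost)
  finally show ?thesis .
qed

lemma norm_sum_powers_le:
  fixes b :: "'a::real_normed_algebra_1"
  assumes "norm b \<le> 1"
  shows "norm (\<Sum>j=1..m. b^j) \<le> m"
proof -
  have "norm (\<Sum>j=1..m. b^j) \<le> (\<Sum>j=1..m. norm b ^ j)"
    by (rule order_trans[OF norm_sum sum_mono]) (rule norm_power_ineq)
  also have "\<dots> \<le> (\<Sum>j=1..m. 1)"
    using assms by (intro sum_mono power_le_one) auto
  finally show ?thesis by simp
qed

lemma resolvent_sum_powers:
  fixes b t y L :: "'a::comm_ring_1"
  assumes "b * (1 + t * L) = 1" and "t + y = 1"
  shows "t * (1 + L) * (\<Sum>j=1..Suc m. b^j) = 1 + t * (\<Sum>j=1..m. b^j) - y * b^Suc m"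
proof -
  have "t * (1 + L) * b - (1 - y * b) = (b * (1 + t * L) - 1) + (t + y - 1) * b"
    by (simp add: algebra_simps)
  then have h: "t * (1 + L) * b = 1 - y * b"
    using assms by simp
  have "t * (1 + L) * (\<Sum>j=1..Suc m. b^j) = t * (1 + L) * b * (1 + (\<Sum>j=1..m. b^j))"
    by (simp only: sum_powers_Suc mult.assoc)
  also have "\<dots> = 1 + (\<Sum>j=1..m. b^j) - y * (b * (1 + (\<Sum>j=1..m. b^j)))"
    unfolding h by (simp add: algebra_simps)
  also have "\<dots> = 1 + (\<Sum>j=1..m. b^j) - y * (\<Sum>j=1..Suc m. b^j)"
    by (simp only: sum_powers_Suc)
  also have "\<dots> = 1 + (t + y) * (\<Sum>j=1..m. b^j) - y * (\<Sum>j=1..Suc m. b^j)"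
    using assms(2) by simp
  also have "\<dots> = 1 + t * (\<Sum>j=1..m. b^j) - y * b^Suc m"
    by (simp add: algebra_simps)
  finally show ?thesis .
qed

lemma cascade_recurrence_solution:
  fixes V :: "nat \<Rightarrow> 'a::comm_ring_1" and b t y L c :: 'a
  assumes b: "b * (1 + t * L) = 1"
    and first: "(1 + t * L) * V 0 = - c"
    and step: "\<And>m. m < n \<Longrightarrow> (1 + t * L) * V (Suc m) = c * t * y^m + y * V m"
    and "m \<le> n"
  shows "y * V m = c * y^m * (t * (\<Sum>j=1..m. b^j) - y * b^Suc m)"
  using \<open>m \<le> n\<close>
proof (induction m)
  case 0
  have "V 0 = b * ((1 + t * L) * V 0)"
    using b by (simp add: mult.assoc[symmetric])
  then have "V 0 = - c * b"
    using first by simp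
  then show ?case by (simp add: algebra_simps)
next
  case (Suc m)
  have "V (Suc m) = b * ((1 + t * L) * V (Suc m))"
    using b by (simp add: mult.assoc[symmetric])
  then have "V (Suc m) = b * (c * t * y^m + y * V m)"
    using step[of m] Suc.prems by simp
  then have "y * V (Suc m) = b * (c * t * y^Suc m + y * (y * V m))"
    by (simp add: algebra_simps)
  also have "\<dots> = b * (c * t * y^Suc m + y * (c * y^m * (t * (\<Sum>j=1..m. b^j) - y * b^Suc m)))"
    using Suc by simp
  also have "\<dots> = c * y^Suc m * (t * (\<Sum>j=1..Suc m. b^j) - y * b^Suc (Suc m))"
    by (simp only: sum_powers_Suc) (simp add: algebra_simps)
  finally show ?case .
qed

lemma cascade_closed_forms:
  fixes V :: "nat \<Rightarrow> 'a::field" and S T Y L b g :: 'a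
  assumes "N \<ge> 1" and "T + Y = 1" and "T \<noteq> 0"
    and b: "b * (1 + T * L) = 1" and g: "g * (1 + L) = 1"
    and e3: "T * (1 + L) * V 3 = S * T * Y^N * (1 + of_nat N * T) * V 1 + Y * V 4 + of_nat N * Y * V (N+5)"
    and e4: "T * (1 + L) * V 4 = S * T^2 * Y^(N-1) * V 1 + Y * V (N+4)"
    and e5: "(1 + T * L) * V 5 = - (S * T^2 * V 1)"
    and e6: "\<forall>m<N. (1 + T * L) * V (m+6) = S * T^2 * V 1 * T * Y^m + Y * V (m+5)"
  shows "\<And>m. m \<le> N \<Longrightarrow>
           Y * V (m+5) = S * T^2 * V 1 * Y^m * (T * (\<Sum>j=1..m. b^j) - Y * b^Suc m)"
    and "V 3 = S * Y^N * (T * (1 + of_nat N * T) * (\<Sum>j=1..Suc N. b^j) + Y * b^Suc N * g) * V 1"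
proof -
  have TL: "T * (1 + L) \<noteq> 0"
    using g \<open>T \<noteq> 0\<close> by auto
  show tail: "Y * V (m+5) = S * T^2 * V 1 * Y^m * (T * (\<Sum>j=1..m. b^j) - Y * b^Suc m)" if "m \<le> N" for m
    using cascade_recurrence_solution[where V = "\<lambda>m. V (m+5)", OF b _ _ that] e5 e6
    by (simp add: add.commute)
  have N: "Suc (N - 1) = N" "Y * Y^(N-1) = Y^N"
    using \<open>N \<ge> 1\<close> by (simp_all add: power_Suc[symmetric])
  note resolvent = resolvent_sum_powers[OF b \<open>T + Y = 1\<close>]
  have "T * (1 + L) * V 4 = S * T^2 * Y^(N-1) * V 1 * (1 + T * (\<Sum>j=1..N-1. b^j) - Y * b^N)"
    using e4 tail[of "N-1"] N by (simp add: algebra_simps)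
  also have "\<dots> = S * T^2 * Y^(N-1) * V 1 * (T * (1 + L) * (\<Sum>j=1..N. b^j))"
    by (simp only: resolvent[of "N-1", unfolded N(1)])
  also have "\<dots> = T * (1 + L) * (S * T^2 * Y^(N-1) * (\<Sum>j=1..N. b^j) * V 1)"
    by (simp add: ac_simps)
  finally have V4: "V 4 = S * T^2 * Y^(N-1) * (\<Sum>j=1..N. b^j) * V 1"
    using TL by simp
  have "T * (1 + L) * V 3 = S * T * Y^N * (1 + of_nat N * T) * V 1 + Y * V 4 + of_nat N * (Y * V (N+5))"
    using e3 by (simp add: algebra_simps)
  also have "\<dots> = S * T * Y^N * (1 + of_nat N * T) * V 1 + Y * (S * T^2 * Y^(N-1) * (\<Sum>j=1..N. b^j) * V 1)
      + of_nat N * (S * T^2 * V 1 * Y^N * (T * (\<Sum>j=1..N. b^j) - Y * b^Suc N))"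
    by (simp only: V4 tail[OF order_refl])
  also have "\<dots> = S * T * Y^N * V 1
      * ((1 + of_nat N * T) * (1 + T * (\<Sum>j=1..N. b^j) - Y * b^Suc N) + Y * b^Suc N)"
    unfolding N(2)[symmetric] by (simp add: algebra_simps power2_eq_square)
  also have "\<dots> = S * T * Y^N * V 1
      * ((1 + of_nat N * T) * (T * (1 + L) * (\<Sum>j=1..Suc N. b^j)) + Y * b^Suc N * (g * (1 + L)))"
    by (simp only: resolvent[of N] g mult_1_right)
  also have "\<dots> = T * (1 + L)
      * (S * Y^N * (T * (1 + of_nat N * T) * (\<Sum>j=1..Suc N. b^j) + Y * b^Suc N * g) * V 1)"
    by (simp add: algebra_simps)
  finally show "V 3 = S * Y^N * (T * (1 + of_nat N * T) * (\<Sum>j=1..Suc N. b^j) + Y * b^Suc N * g) * V 1"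
    using TL by simp
qed

lemma one_plus_imaginary_bounds:
  fixes L :: complex
  assumes "Re L = 0"
  shows "1 + L \<noteq> 0" and "norm (1 / (1 + L)) \<le> 1" and "L \<noteq> 0 \<Longrightarrow> norm (1 / (1 + L)) < 1"
proof -
  have norm: "norm (1 + L) = sqrt (1 + (Im L)^2)"
    using assms by (simp add: cmod_def)
  then have "1 \<le> norm (1 + L)"
    by simp
  then show "1 + L \<noteq> 0" and "norm (1 / (1 + L)) \<le> 1"
    by (auto simp: norm_divide divide_le_eq_1)
  assume "L \<noteq> 0"
  with assms have "Im L \<noteq> 0"
    by (simp add: complex_eq_iff)
  with norm have "1 < norm (1 + L)"
    by simp
  then show "norm (1 / (1 + L)) < 1"
    by (simp add: norm_divide divide_less_eq_1)
qed

lemma nonneg_before_unique_root: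
  fixes f :: "real \<Rightarrow> real"
  assumes "continuous_on {0..ystar} f" and "f 0 > 0" and "ystar < 1"
    and "\<forall>z. 0 < z \<and> z < 1 \<and> f z = 0 \<longrightarrow> z = ystar"
    and "0 \<le> y" and "y \<le> ystar"
  shows "f y \<ge> 0"
proof (rule ccontr)
  assume "\<not> f y \<ge> 0"
  moreover have "continuous_on {0..y} f"
    using assms(1) by (rule continuous_on_subset) (use assms(6) in auto)
  ultimately obtain z where z: "0 \<le> z" "z \<le> y" "f z = 0"
    using IVT2'[of f y 0 0] assms(2,5) by auto
  with \<open>\<not> f y \<ge> 0\<close> assms(2) have "0 < z" "z < y"
    by (auto simp: order.order_iff_strict)
  with z assms(3,4,6) show False by auto
qed

section \<open>The linearization of the vector field\<close>

text \<open>It is stated over any real algebra: over \<open>real\<close> it yields the partial derivatives,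
  over \<open>complex\<close> the action of the Jacobian on eigenvectors.\<close>

definition DFmap ::
    "nat \<Rightarrow> real \<Rightarrow> (nat \<Rightarrow> real) \<Rightarrow> (nat \<Rightarrow> 'a::real_algebra_1) \<Rightarrow> nat \<Rightarrow> 'a" where
  "DFmap N k U V j =
     (if j = 1 then V 3 - of_real (k * U 2) * V 1 - of_real (k * U 1) * V 2
      else if j = 2 then - V 2
      else if j = 3 then - V 3 + of_real (k * U 4 + real N * k * U (N+5)) * V 1
                         + of_real (k * U 1) * (V 4 + of_nat N * V (N+5))
      else if j = 4 then - V 4 + of_real (k * U (N+4)) * V 1 + of_real (k * U 1) * V (N+4)
      else if j = 5 then - V 5 - of_real (k * U 5) * V 1 - of_real (k * U 1) * V 5
      else if 6 \<le> j \<and> j \<le> N+5 then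
        - V j + of_real (k * (U (j-1) - U j)) * V 1 + of_real (k * U 1) * (V (j-1) - V j)
      else 0)"

lemma Fmap_fun_upd_affine:
  assumes "N \<ge> 1"
  shows "Fmap N k r \<alpha> (U(m := t)) j
           = Fmap N k r \<alpha> (U(m := 0)) j + t * DFmap N k U (\<lambda>i. if i = m then 1 else 0) j"
proof -
  consider "j = 1" | "j = 2" | "j = 3" | "j = 4" | "j = 5" | "6 \<le> j \<and> j \<le> N+5" | "j = 0 \<or> j > N+5"
    by linarith
  then show ?thesis
  proof cases
    case 1 then show ?thesis
      by (cases "m = 1"; cases "m = 2"; cases "m = 3"; simp add: Fmap_def DFmap_def algebra_simps)
  next
    case 2 then show ?thesis
      by (cases "m = 2"; simp add: Fmap_def DFmap_def)
  next
    case 3 then show ?thesis using assms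
      by (cases "m = 1"; cases "m = 3"; cases "m = 4"; cases "m = N+5";
          simp add: Fmap_def DFmap_def algebra_simps)
  next
    case 4 then show ?thesis using assms
      by (cases "m = 1"; cases "m = 4"; cases "m = N+4"; simp add: Fmap_def DFmap_def algebra_simps)
  next
    case 5 then show ?thesis
      by (cases "m = 1"; cases "m = 5"; simp add: Fmap_def DFmap_def algebra_simps)
  next
    case 6
    then have "j - 1 \<noteq> 1" by linarith
    with 6 show ?thesis
      by (cases "m = 1"; cases "m = j - 1"; cases "m = j"; simp add: Fmap_def DFmap_def algebra_simps)
  next
    case 7
    then have "j \<noteq> 1" "j \<noteq> 2" "j \<noteq> 3" "j \<noteq> 4" "j \<noteq> 5" "\<not> (6 \<le> j \<and> j \<le> N+5)"
      by auto
    then show ?thesis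
      unfolding Fmap_def DFmap_def by (simp only: if_False mult_zero_right add_0_right)
  qed
qed

lemma DFmap_of_real: "of_real (DFmap N k U V j) = DFmap N k U (\<lambda>i. of_real (V i)) j"
  unfolding DFmap_def by simp

lemma DFmap_sum:
  "DFmap N k U (\<lambda>i. \<Sum>l\<in>A. c l * W l i) j = (\<Sum>l\<in>A. c l * DFmap N k U (W l) j :: complex)"
  unfolding DFmap_def
  by (auto simp: sum_distrib_left sum.distrib sum_subtractf algebra_simps sum_negf)

lemma DFmap_cong:
  assumes "N \<ge> 1" and "\<And>i. 1 \<le> i \<Longrightarrow> i \<le> N+5 \<Longrightarrow> V i = W i"
  shows "DFmap N k U V j = DFmap N k U W j"
  using assms unfolding DFmap_def by auto

lemma deriv_Fmap_fun_upd:
  assumes "N \<ge> 1"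
  shows "deriv (\<lambda>t. Fmap N k r \<alpha> (U(m := t)) j) x = DFmap N k U (\<lambda>i. if i = m then 1 else 0) j"
proof -
  have "((\<lambda>t. c + t * d) has_real_derivative d) (at x)" for c d :: real
    by (auto intro!: derivative_eq_intros)
  moreover have "(\<lambda>t. Fmap N k r \<alpha> (U(m := t)) j)
      = (\<lambda>t. Fmap N k r \<alpha> (U(m := 0)) j + t * DFmap N k U (\<lambda>i. if i = m then 1 else 0) j)"
    using Fmap_fun_upd_affine[OF assms] by (rule ext)
  ultimately show ?thesis
    by (simp add: DERIV_imp_deriv)
qed

lemma jacobian_Fmap_mult_vec:
  assumes "N \<ge> 1" and "v \<in> carrier_vec (N+5)" and "i < N+5"
  shows "(jacobian (N+5) (Fmap N k r \<alpha>) U *\<^sub>v v) $ i = DFmap N k U (\<lambda>j. v $ (j - 1)) (Suc i)"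
proof -
  have basis_of_real: "(\<lambda>j. complex_of_real (if j = m then 1 else 0)) = (\<lambda>j. if j = m then 1 else 0)"
    for m :: nat by auto
  have entry: "jacobian (N+5) (Fmap N k r \<alpha>) U $$ (i, l)
                = DFmap N k U (\<lambda>j. if j = Suc l then 1 else 0) (Suc i)"
    if "l < N+5" for l
  proof -
    have "jacobian (N+5) (Fmap N k r \<alpha>) U $$ (i, l)
          = of_real (deriv (\<lambda>t. Fmap N k r \<alpha> (U(Suc l := t)) (Suc i)) (U (Suc l)))"
      using assms(3) that by (simp add: jacobian_def)
    then show ?thesis
      by (simp only: deriv_Fmap_fun_upd[OF assms(1)] DFmap_of_real basis_of_real)
  qed
  have dims: "dim_row (jacobian (N+5) (Fmap N k r \<alpha>) U) = N+5"
    "dim_col (jacobian (N+5) (Fmap N k r \<alpha>) U) = N+5"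
    by (simp_all add: jacobian_def)
  have "(jacobian (N+5) (Fmap N k r \<alpha>) U *\<^sub>v v) $ i
        = (\<Sum>l<N+5. jacobian (N+5) (Fmap N k r \<alpha>) U $$ (i, l) * v $ l)"
    using assms(2,3) dims by (simp add: scalar_prod_def lessThan_atLeast0)
  also have "\<dots> = (\<Sum>l<N+5. v $ l * DFmap N k U (\<lambda>j. if j = Suc l then 1 else 0) (Suc i))"
    by (intro sum.cong) (simp_all add: entry)
  also have "\<dots> = DFmap N k U (\<lambda>j. \<Sum>l<N+5. v $ l * (if j = Suc l then 1 else 0)) (Suc i)"
    by (rule DFmap_sum[symmetric])
  also have "\<dots> = DFmap N k U (\<lambda>j. v $ (j - 1)) (Suc i)"
  proof (rule DFmap_cong[OF assms(1)])
    fix j :: nat assume j: "1 \<le> j" "j \<le> N+5"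
    then have "(\<Sum>l<N+5. v $ l * (if j = Suc l then 1 else 0))
               = (\<Sum>l<N+5. if l = j - 1 then v $ l else 0)"
      by (intro sum.cong) auto
    with j show "(\<Sum>l<N+5. v $ l * (if j = Suc l then 1 else 0)) = v $ (j - 1)"
      by simp
  qed
  finally show ?thesis .
qed

lemma eigenvalue_jacobian_FmapE:
  assumes "N \<ge> 1" and "eigenvalue (jacobian (N+5) (Fmap N k r \<alpha>) U) L"
  obtains V j where "1 \<le> j" "j \<le> N+5" "V j \<noteq> 0"
    and "\<forall>i\<in>{1..N+5}. DFmap N k U V i = L * V i"
proof -
  obtain v where v: "v \<in> carrier_vec (N+5)" "v \<noteq> 0\<^sub>v (N+5)"
    and ev: "jacobian (N+5) (Fmap N k r \<alpha>) U *\<^sub>v v = L \<cdot>\<^sub>v v"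
    using assms(2) unfolding eigenvalue_def eigenvector_def by (auto simp: jacobian_def)
  have "\<exists>i<N+5. v $ i \<noteq> 0"
  proof (rule ccontr)
    assume "\<not> (\<exists>i<N+5. v $ i \<noteq> 0)"
    then have "v = 0\<^sub>v (N+5)"
      using v(1) by (intro eq_vecI) auto
    with v(2) show False ..
  qed
  then obtain i where "i < N+5" "v $ i \<noteq> 0"
    by blast
  moreover have "DFmap N k U (\<lambda>j. v $ (j - 1)) j = L * v $ (j - 1)" if "1 \<le> j" "j \<le> N+5" for j
  proof -
    have "DFmap N k U (\<lambda>j. v $ (j - 1)) j = (jacobian (N+5) (Fmap N k r \<alpha>) U *\<^sub>v v) $ (j - 1)"
      using jacobian_Fmap_mult_vec[OF assms(1) v(1), where i = "j - 1"] that by simp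
    also have "\<dots> = L * v $ (j - 1)"
      using ev v(1) that by simp
    finally show ?thesis .
  qed
  ultimately show thesis
    using that[of "Suc i" "\<lambda>j. v $ (j - 1)"] by simp
qed

lemma k_mult_Ueq_1: "k \<noteq> 0 \<Longrightarrow> k * Ueq N k r y 1 = y / (1 - y)"
  by (simp add: Ueq_def)

lemma DFmap_Ueq:
  fixes V :: "nat \<Rightarrow> complex" and k r y :: real
  assumes "N \<ge> 1" and "k \<noteq> 0"
  defines "a \<equiv> complex_of_real (y / (1 - y))"
  shows "DFmap N k (Ueq N k r y) V 1 = V 3 - of_real (k * r) * V 1 - a * V 2"
    and "DFmap N k (Ueq N k r y) V 2 = - V 2"
    and "DFmap N k (Ueq N k r y) V 3
           = - V 3 + of_real (k * r * y^N * (1 + N * (1 - y))) * V 1 + a * (V 4 + of_nat N * V (N+5))"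
    and "DFmap N k (Ueq N k r y) V 4 = - V 4 + of_real (k * r * (1 - y) * y^(N-1)) * V 1 + a * V (N+4)"
    and "DFmap N k (Ueq N k r y) V 5 = - V 5 - of_real (k * r * (1 - y)) * V 1 - a * V 5"
    and "m < N \<Longrightarrow> DFmap N k (Ueq N k r y) V (m+6)
           = - V (m+6) + of_real (k * r * (1 - y)^2 * y^m) * V 1 + a * (V (m+5) - V (m+6))"
  using assms(1) unfolding DFmap_def k_mult_Ueq_1[OF assms(2)] a_def
  by (auto simp: Ueq_def algebra_simps power2_eq_square)

lemma Ueq_eigen_cascade:
  fixes V :: "nat \<Rightarrow> complex" and L :: complex and k r y :: real
  assumes N: "N \<ge> 1" and "k \<noteq> 0" and "y \<noteq> 1" and "Re L = 0"
    and eigen: "\<forall>j\<in>{1..N+5}. DFmap N k (Ueq N k r y) V j = L * V j"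
  defines "Y \<equiv> complex_of_real y" and "T \<equiv> complex_of_real (1 - y)"
    and "S \<equiv> complex_of_real (k * r)"
  shows "V 2 = 0"
    and "L * V 1 = V 3 - S * V 1"
    and "T * (1 + L) * V 3 = S * T * Y^N * (1 + of_nat N * T) * V 1 + Y * V 4 + of_nat N * Y * V (N+5)"
    and "T * (1 + L) * V 4 = S * T^2 * Y^(N-1) * V 1 + Y * V (N+4)"
    and "(1 + T * L) * V 5 = - (S * T^2 * V 1)"
    and "\<forall>m<N. (1 + T * L) * V (m+6) = S * T^2 * V 1 * T * Y^m + Y * V (m+5)"
proof -
  have T: "1 - complex_of_real y \<noteq> 0"
    using \<open>y \<noteq> 1\<close> by simp
  note row = DFmap_Ueq[OF N \<open>k \<noteq> 0\<close>, where r = r and y = y and V = V]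
  have eigen: "DFmap N k (Ueq N k r y) V j = L * V j" if "1 \<le> j" "j \<le> N+5" for j
    using eigen that by simp
  have "L * V 2 = - V 2"
    using eigen[of 2] row(2) by simp
  then have "(1 + L) * V 2 = 0"
    by (simp add: algebra_simps)
  moreover have "1 + L \<noteq> 0"
    using \<open>Re L = 0\<close> by (auto simp: complex_eq_iff)
  ultimately show "V 2 = 0"
    by simp
  then show "L * V 1 = V 3 - S * V 1"
    using eigen[of 1] row(1) by (simp add: S_def)
  show "T * (1 + L) * V 3 = S * T * Y^N * (1 + of_nat N * T) * V 1 + Y * V 4 + of_nat N * Y * V (N+5)"
    using eigen[of 3] row(3) T by (simp add: S_def Y_def T_def field_simps)
  show "T * (1 + L) * V 4 = S * T^2 * Y^(N-1) * V 1 + Y * V (N+4)"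
    using eigen[of 4] row(4) T by (simp add: S_def Y_def T_def field_simps power2_eq_square)
  show "(1 + T * L) * V 5 = - (S * T^2 * V 1)"
    using eigen[of 5] row(5) T by (simp add: S_def Y_def T_def field_simps power2_eq_square)
  show "\<forall>m<N. (1 + T * L) * V (m+6) = S * T^2 * V 1 * T * Y^m + Y * V (m+5)"
  proof (intro allI impI)
    fix m assume "m < N"
    then show "(1 + T * L) * V (m+6) = S * T^2 * V 1 * T * Y^m + Y * V (m+5)"
      using eigen[of "m+6"] row(6)[OF \<open>m < N\<close>] T
      by (simp add: S_def Y_def T_def field_simps power2_eq_square)
  qed
qed

lemma one_minus_pN:
  "1 - pN N y = y^N * ((N + 1) * (1 - y) * (1 + N * (1 - y)) + y)"
  unfolding pN_def by (simp add: algebra_simps power2_eq_square)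

lemma norm_cascade_gain_lt:
  fixes b g :: complex and y :: real
  assumes "0 < y" and "y < 1" and "norm b \<le> 1" and "norm g < 1"
  defines "t \<equiv> 1 - y"
  shows "norm (of_real y ^ N * (of_real t * (1 + of_nat N * of_real t) * (\<Sum>j=1..Suc N. b^j)
                                + of_real y * b^Suc N * g)) < 1 - pN N y"
proof -
  have "0 < t"
    using assms(2) by (simp add: t_def)
  have c: "complex_of_real t * (1 + of_nat N * of_real t) = of_real (t * (1 + N * t))"
    by simp
  have "norm (of_real (t * (1 + N * t)) * (\<Sum>j=1..Suc N. b^j)) \<le> t * (1 + N * t) * Suc N"
    unfolding norm_mult norm_of_real
    by (rule mult_mono) (use \<open>0 < t\<close> norm_sum_powers_le[OF assms(3), of "Suc N"] in auto)
  moreover have "norm (of_real y * b^Suc N * g) < y"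
  proof -
    have "norm (of_real y * b^Suc N * g) = y * (norm b ^ Suc N * norm g)"
      using assms(1) by (simp add: norm_mult norm_power)
    also have "\<dots> < y * 1"
    proof (rule mult_strict_left_mono)
      have "norm b ^ Suc N * norm g \<le> norm g"
        by (rule mult_left_le_one_le) (use power_le_one[OF _ assms(3), of "Suc N"] in auto)
      with assms(4) show "norm b ^ Suc N * norm g < 1"
        by simp
    qed (use assms(1) in simp)
    finally show ?thesis by simp
  qed
  ultimately have "norm (of_real (t * (1 + N * t)) * (\<Sum>j=1..Suc N. b^j) + of_real y * b^Suc N * g)
                   < t * (1 + N * t) * Suc N + y"
    by (meson add_le_less_mono norm_triangle_ineq order.strict_trans1)
  then have "norm (of_real y ^ N * (of_real (t * (1 + N * t)) * (\<Sum>j=1..Suc N. b^j) + of_real y * b^Suc N * g))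
             < y^N * (t * (1 + N * t) * Suc N + y)"
    using assms(1) by (simp add: norm_mult norm_power)
  also have "\<dots> = 1 - pN N y"
    by (simp add: one_minus_pN t_def algebra_simps)
  finally show ?thesis
    unfolding c .
qed

lemma DFmap_Ueq_imaginary_eigenvector_trivial:
  fixes V :: "nat \<Rightarrow> complex" and L :: complex
  assumes N: "N \<ge> 1" and "k > 0" and "r > 0" and "0 < y" and "y < 1" and "pN N y \<ge> 0"
    and L: "Re L = 0" "L \<noteq> 0"
    and eigen: "\<forall>j\<in>{1..N+5}. DFmap N k (Ueq N k r y) V j = L * V j"
    and j: "1 \<le> j" "j \<le> N+5"
  shows "V j = 0"
proof -
  define Y T S
    where "Y = complex_of_real y" and "T = complex_of_real (1 - y)" and "S = complex_of_real (k * r)"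
  define b g where "b = 1 / (1 + T * L)" and "g = 1 / (1 + L)"
  have "k \<noteq> 0" "y \<noteq> 1"
    using \<open>k > 0\<close> \<open>y < 1\<close> by simp_all
  note eqs = Ueq_eigen_cascade[OF N this L(1) eigen, folded Y_def T_def S_def]
  have "Re (T * L) = 0"
    using L(1) by (simp add: T_def)
  note b_bounds = one_plus_imaginary_bounds[OF this, folded b_def]
    and g_bounds = one_plus_imaginary_bounds[OF L(1), folded g_def]
  have b: "b * (1 + T * L) = 1" and g: "g * (1 + L) = 1"
    using b_bounds(1) g_bounds(1) by (simp_all add: b_def g_def)
  have "T \<noteq> 0" "T + Y = 1"
    using \<open>y < 1\<close> by (simp_all add: T_def Y_def)
  note cascade = cascade_closed_forms[OF N \<open>T + Y = 1\<close> \<open>T \<noteq> 0\<close> b g eqs(3-6)]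
  define H where "H = Y^N * (T * (1 + of_nat N * T) * (\<Sum>j=1..Suc N. b^j) + Y * b^Suc N * g)"
  have "norm H < 1 - pN N y"
    unfolding H_def T_def Y_def
    using norm_cascade_gain_lt[OF \<open>0 < y\<close> \<open>y < 1\<close> b_bounds(2) g_bounds(3)[OF L(2)]] by simp
  then have "Re (S * H) < k * r"
    using complex_Re_le_cmod[of H] \<open>pN N y \<ge> 0\<close> \<open>k > 0\<close> \<open>r > 0\<close> by (simp add: S_def)
  then have "Re (L + S - S * H) > 0"
    using L(1) by (simp add: S_def)
  then have "L + S - S * H \<noteq> 0"
    by (metis less_irrefl zero_complex.sel(1))
  moreover have "V 1 * (L + S - S * H) = 0"
    using eqs(2) cascade(2) by (simp add: H_def algebra_simps)
  ultimately have V1: "V 1 = 0"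
    by simp
  have tail: "V (m+5) = 0" if "m \<le> N" for m
    using cascade(1)[OF that] V1 \<open>0 < y\<close> by (simp add: Y_def)
  have "V 4 = 0"
    using eqs(4) V1 tail[of "N-1"] N g_bounds(1) \<open>T \<noteq> 0\<close> by (simp add: add.commute)
  show ?thesis
  proof (cases "5 \<le> j")
    case True
    then show ?thesis
      using tail[of "j - 5"] j by simp
  next
    case False
    with j have "j \<in> {1, 2, 3, 4}"
      by auto
    then show ?thesis
      using V1 eqs(1) cascade(2) \<open>V 4 = 0\<close> by auto
  qed
qed

theorem lemma3p3:
  fixes N :: nat and k r ystar y :: real
  assumes "N \<ge> 1" and "k > 0" and "r > 0"
    and "0 < ystar" and "ystar < 1" and "pN N ystar = 0"
    and "\<forall>z. 0 < z \<and> z < 1 \<and> pN N z = 0 \<longrightarrow> z = ystar"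
    and "0 < y" and "y \<le> ystar"
  shows "\<forall>\<omega>::real. \<omega> \<noteq> 0 \<longrightarrow>
     \<not> eigenvalue (jacobian (N+5) (Fmap N k r (r * FtildeN N y)) (Ueq N k r y))
                  (\<i> * complex_of_real \<omega>)"
proof (intro allI impI notI)
  fix \<omega> :: real
  assume "\<omega> \<noteq> 0"
    and ev: "eigenvalue (jacobian (N+5) (Fmap N k r (r * FtildeN N y)) (Ueq N k r y))
               (\<i> * complex_of_real \<omega>)"
  obtain V j where "1 \<le> j" "j \<le> N+5" "V j \<noteq> 0"
    and eigen: "\<forall>i\<in>{1..N+5}. DFmap N k (Ueq N k r y) V i = (\<i> * complex_of_real \<omega>) * V i"
    by (rule eigenvalue_jacobian_FmapE[OF assms(1) ev])
  have "pN N y \<ge> 0"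
  proof (rule nonneg_before_unique_root[of ystar "pN N"])
    show "continuous_on {0..ystar} (pN N)"
      unfolding pN_def by (intro continuous_intros)
    show "pN N 0 > 0"
      using assms(1) by (simp add: pN_def power_0_left)
  qed (use assms in auto)
  moreover have "y < 1" "Re (\<i> * complex_of_real \<omega>) = 0" "\<i> * complex_of_real \<omega> \<noteq> 0"
    using assms(5,9) \<open>\<omega> \<noteq> 0\<close> by auto
  ultimately have "V j = 0"
    using DFmap_Ueq_imaginary_eigenvector_trivial[OF assms(1-3,8)] eigen \<open>1 \<le> j\<close> \<open>j \<le> N+5\<close>
    by blast
  with \<open>V j \<noteq> 0\<close> show False ..
qed

end
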